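(* Let $T_1,T_2$ be unordered increasing trees with disjoint vertex-sets, let $v_1\in V(T_1)$, $v_2\in V(T_2)$ with $v_1>v_2$, and let $R=\mathrm{spl}(T_1,v_1;T_2,v_2)$. Then: (a) For $\ell\in\{1,2\}$ and any vertices $i,j$ of $T_\ell$, $i$ is an ancestor of $j$ in $T_\ell$ if and only if $i$ is an ancestor of $j$ in $R$. Consequently, given the sets $V(T_1)$ and $V(T_2)$, the trees $T_1$ and $T_2$ can be recovered from $R$. (b) For every vertex $i$ of $T_1$, $\sigma_i(R)=\sigma_i(T_1)$; moreover $\sigma_{v_2}(R)=\sigma_{v_2}(T_2)+1$, and $\sigma_i(R)=\sigma_i(T_2)$ for every other vertex $i\ne v_2$ of $T_2$.
   Context: An unordered increasing tree is a rooted tree whose vertices are distinct positive integers, sons unordered, each son larger than its father. Ancestors/descendants are defined as usual in the rooted tree. $\sigma_i(T)$ denotes the number of sons of vertex $i$ in $T$. $v$-decomposition: for a vertex $v$ of an unordered increasing tree $T$, let $a_1<a_2<\dots<a_k=v$ be the chain from the root $a_1$ to $v$. Removing the edges of this chain leaves $k$ components, each an unordered increasing tree rooted at some $a_i$; call $T^{(a_i)}$ the component rooted at $a_i$. The list $T^{(a_1)},\dots,T^{(a_k)}$ is the $v$-decomposition of $T$. Splice: let $T_1,T_2$ be unordered increasing trees with disjoint vertex-sets, $v_1\in V(T_1)$, $v_2\in V(T_2)$, $v_1>v_2$, with $v_1$-decomposition $T_1^{(a_1)},\dots,T_1^{(a_k)}$ of $T_1$ and $v_2$-decomposition $T_2^{(b_1)},\dots,T_2^{(b_m)}$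 of $T_2$. Then $\mathrm{spl}(T_1,v_1;T_2,v_2)$ is the unordered increasing tree on $V(T_1)\cup V(T_2)$ obtained by sorting $\{a_1,\dots,a_k\}\cup\{b_1,\dots,b_m\}$ increasingly into $c_1<\dots<c_{k+m}$ (so $c_{k+m}=v_1$), joining these into a chain with $c_1$ the root and $c_{s}$ the father of $c_{s+1}$, and attaching at each $c_s$ the tree among $T_1^{(a_i)},T_2^{(b_j)}$ rooted at $c_s$; equivalently it is the tree whose $v_1$-decomposition is the list of all the $T_1^{(a_i)}$ and $T_2^{(b_j)}$ ordered by their roots. *)

theory Defs
  imports Main
begin

text \<open>An unordered increasing tree is represented by its vertex set V (positive integers)
and its set E of edges (father, son).\<close>

definition inc_tree :: "nat set \<Rightarrow> (nat \<times> nat) set \<Rightarrow> bool" where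
  "inc_tree V E \<longleftrightarrow>
     finite V \<and> V \<noteq> {} \<and> 0 \<notin> V \<and> E \<subseteq> V \<times> V \<and>
     (\<forall>(a, b) \<in> E. a < b) \<and>
     (\<exists>!r. r \<in> V \<and> (\<forall>a. (a, r) \<notin> E) \<and>
        (\<forall>b \<in> V. b \<noteq> r \<longrightarrow> (\<exists>!a. (a, b) \<in> E)))"

definition ancestor :: "(nat \<times> nat) set \<Rightarrow> nat \<Rightarrow> nat \<Rightarrow> bool" where
  "ancestor E i j \<longleftrightarrow> (i, j) \<in> E\<^sup>+"

definition sons :: "(nat \<times> nat) set \<Rightarrow> nat \<Rightarrow> nat" where
  "sons E i = card {j. (i, j) \<in> E}"

text \<open>v-decomposition: the chain a_1 < ... < a_k = v from the root to v, and the
components T^(a) obtained by deleting the chain edges.\<close>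
definition chain_to :: "(nat \<times> nat) set \<Rightarrow> nat \<Rightarrow> nat set" where
  "chain_to E v = {a. (a, v) \<in> E\<^sup>*}"

definition rest_edges :: "(nat \<times> nat) set \<Rightarrow> nat \<Rightarrow> (nat \<times> nat) set" where
  "rest_edges E v = {(x, y) \<in> E. \<not> (x \<in> chain_to E v \<and> y \<in> chain_to E v)}"

definition comp_verts :: "(nat \<times> nat) set \<Rightarrow> nat \<Rightarrow> nat \<Rightarrow> nat set" where
  "comp_verts E v a = {x. (a, x) \<in> (rest_edges E v)\<^sup>*}"

definition comp_edges :: "(nat \<times> nat) set \<Rightarrow> nat \<Rightarrow> nat \<Rightarrow> (nat \<times> nat) set" where
  "comp_edges E v a = {(x, y) \<in> rest_edges E v. x \<in> comp_verts E v a}"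

definition chain_edges :: "nat set \<Rightarrow> (nat \<times> nat) set" where
  "chain_edges C = {(c, d). c \<in> C \<and> d \<in> C \<and> c < d \<and> \<not> (\<exists>e \<in> C. c < e \<and> e < d)}"

definition spl_edges :: "(nat \<times> nat) set \<Rightarrow> nat \<Rightarrow> (nat \<times> nat) set \<Rightarrow> nat \<Rightarrow> (nat \<times> nat) set" where
  "spl_edges E1 v1 E2 v2 =
     chain_edges (chain_to E1 v1 \<union> chain_to E2 v2) \<union>
     (\<Union>a \<in> chain_to E1 v1. comp_edges E1 v1 a) \<union>
     (\<Union>b \<in> chain_to E2 v2. comp_edges E2 v2 b)"

end

theory Submission
  imports Defs
begin

text \<open>The splice R keeps every edge of T1 and T2 that is off the two chains and replaces the
two chains by the single sorted chain through their union. An R-path starting at a vertex i of T1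
can enter T2 only by a chain edge, and then stays on the chain of T2 above i until it leaves that
chain, after which it never comes back to T1; hence R-paths between vertices of T1 correspond to
T1-paths, and symmetrically for T2. Since an increasing tree is the covering relation of its
ancestor order, T1 and T2 are recovered from R. As for the sons, a vertex of T_l loses its son on
the chain of T_l and gains its successor on the merged chain: these cancel except at v2, which
has no son on its own chain but is followed by a larger chain vertex of T1 (v1 > v2).\<close>

lemma inc_tree_edges_subset: "inc_tree V E \<Longrightarrow> E \<subseteq> V \<times> V"
  by (simp add: inc_tree_def)

lemma inc_tree_edge_less: "inc_tree V E \<Longrightarrow> (a, b) \<in> E \<Longrightarrow> a < b"
  unfolding inc_tree_def by blast

lemma inc_tree_trancl_less:
  assumes "inc_tree V E" "(a, b) \<in> E\<^sup>+" shows "a < b"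
  using assms(2) by induct (auto dest: inc_tree_edge_less[OF assms(1)])

lemma inc_tree_rtrancl_le:
  assumes "inc_tree V E" "(a, b) \<in> E\<^sup>*" shows "a \<le> b"
  using assms(2) inc_tree_trancl_less[OF assms(1)] by (force simp: rtrancl_eq_or_trancl)

lemma inc_tree_parent_unique:
  assumes T: "inc_tree V E" and "(a, b) \<in> E" "(c, b) \<in> E" shows "a = c"
proof -
  obtain r where r: "\<forall>a. (a, r) \<notin> E" "\<forall>b \<in> V. b \<noteq> r \<longrightarrow> (\<exists>!a. (a, b) \<in> E)"
    using T unfolding inc_tree_def by blast
  have "b \<in> V" "b \<noteq> r" using inc_tree_edges_subset[OF T] assms(2) r(1) by blast+
  then show ?thesis using r(2) assms(2,3) by blast
qed

lemma inc_tree_root: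
  assumes T: "inc_tree V E"
  obtains r where "r \<in> V" "\<forall>b \<in> V. (r, b) \<in> E\<^sup>*" "\<forall>b \<in> V. b \<noteq> r \<longrightarrow> (\<exists>a. (a, b) \<in> E)"
proof -
  obtain r where r: "r \<in> V" "\<forall>b \<in> V. b \<noteq> r \<longrightarrow> (\<exists>!a. (a, b) \<in> E)"
    using T unfolding inc_tree_def by blast
  have "(r, b) \<in> E\<^sup>*" if "b \<in> V" for b
    using that
  proof (induction b rule: less_induct)
    case (less b)
    show ?case
    proof (cases "b = r")
      case False
      then obtain a where a: "(a, b) \<in> E" using r(2) less.prems by blast
      have "(r, a) \<in> E\<^sup>*"
        using less.IH inc_tree_edge_less[OF T a] inc_tree_edges_subset[OF T] a by blast
      then show ?thesis using a by (rule rtrancl_into_rtrancl)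
    qed simp
  qed
  then show ?thesis using that r by blast
qed

lemma inc_tree_ancestors_comparable:
  assumes T: "inc_tree V E" and "(a, x) \<in> E\<^sup>*" "(b, x) \<in> E\<^sup>*"
  shows "(a, b) \<in> E\<^sup>* \<or> (b, a) \<in> E\<^sup>*"
  using assms(2,3)
proof (induction arbitrary: b rule: rtrancl_induct)
  case (step y z)
  from \<open>(b, z) \<in> E\<^sup>*\<close> show ?case
  proof (cases rule: rtranclE)
    case base
    then show ?thesis using step.hyps by (meson rtrancl_into_rtrancl)
  next
    case (step w)
    then have "w = y" using inc_tree_parent_unique[OF T] \<open>(y, z) \<in> E\<close> by blast
    then show ?thesis using step.IH step by blast
  qed
qed simp

lemma inc_tree_edge_not_between:
  assumes T: "inc_tree V E" and ab: "(a, b) \<in> E" and "(a, c) \<in> E\<^sup>+" "(c, b) \<in> E\<^sup>+"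
  shows False
proof -
  from \<open>(c, b) \<in> E\<^sup>+\<close> obtain w where cw: "(c, w) \<in> E\<^sup>*" and "(w, b) \<in> E" by (meson tranclD2)
  then have "w = a" using inc_tree_parent_unique[OF T] ab by simp
  then have "c \<le> a" using inc_tree_rtrancl_le[OF T cw] by simp
  then show False using inc_tree_trancl_less[OF T \<open>(a, c) \<in> E\<^sup>+\<close>] by linarith
qed

lemma inc_tree_edges_eq:
  assumes T: "inc_tree V E"
  shows "E = E\<^sup>+ - E\<^sup>+ O E\<^sup>+"
proof (intro set_eqI iffI)
  fix p assume "p \<in> E"
  then show "p \<in> E\<^sup>+ - E\<^sup>+ O E\<^sup>+"
    using inc_tree_edge_not_between[OF T] by (cases p) auto
next
  fix p assume p: "p \<in> E\<^sup>+ - E\<^sup>+ O E\<^sup>+"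
  obtain a b where [simp]: "p = (a, b)" by (cases p)
  from p have "(a, b) \<in> E\<^sup>+" by simp
  then obtain w where aw: "(a, w) \<in> E\<^sup>*" and wb: "(w, b) \<in> E" by (meson tranclD2)
  have "a = w"
  proof (rule ccontr)
    assume "a \<noteq> w"
    then have "(a, w) \<in> E\<^sup>+" using aw by (simp add: rtrancl_eq_or_trancl)
    then show False using p wb by (auto intro: r_into_trancl)
  qed
  then show "p \<in> E" using wb by simp
qed

lemma inc_tree_eqI_trancl:
  assumes T: "inc_tree V E" and T': "inc_tree V E'"
    and "\<forall>i \<in> V. \<forall>j \<in> V. (i, j) \<in> E\<^sup>+ \<longleftrightarrow> (i, j) \<in> E'\<^sup>+"
  shows "E = E'"
proof -
  have "E\<^sup>+ \<subseteq> V \<times> V" "E'\<^sup>+ \<subseteq> V \<times> V"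
    using trancl_subset_Sigma[OF inc_tree_edges_subset] T T' by blast+
  then have "E\<^sup>+ = E'\<^sup>+" using assms(3) by auto
  then show ?thesis by (metis inc_tree_edges_eq[OF T] inc_tree_edges_eq[OF T'])
qed

lemma chain_to_iff: "a \<in> chain_to E v \<longleftrightarrow> (a, v) \<in> E\<^sup>*"
  by (simp add: chain_to_def)

lemma chain_to_self [simp]: "v \<in> chain_to E v"
  by (simp add: chain_to_iff)

lemma chain_to_closed: "(a, x) \<in> E\<^sup>* \<Longrightarrow> x \<in> chain_to E v \<Longrightarrow> a \<in> chain_to E v"
  by (simp add: chain_to_iff)

lemma chain_to_subset:
  assumes T: "inc_tree V E" and v: "v \<in> V" shows "chain_to E v \<subseteq> V"
proof
  fix a assume "a \<in> chain_to E v"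
  then have "(a, v) \<in> E\<^sup>*" by (simp add: chain_to_iff)
  then show "a \<in> V"
    by (cases rule: converse_rtranclE) (use v inc_tree_edges_subset[OF T] in auto)
qed

lemma finite_chain_to: "inc_tree V E \<Longrightarrow> v \<in> V \<Longrightarrow> finite (chain_to E v)"
  using chain_to_subset finite_subset inc_tree_def by metis

lemma chain_to_le: "inc_tree V E \<Longrightarrow> a \<in> chain_to E v \<Longrightarrow> a \<le> v"
  by (simp add: chain_to_iff inc_tree_rtrancl_le)

lemma chain_to_has_greater_iff:
  "inc_tree V E \<Longrightarrow> (\<exists>d \<in> chain_to E v. a < d) \<longleftrightarrow> a < v"
  using chain_to_le[of V E _ v] chain_to_self[of v E] less_le_trans by blast

lemma chain_to_trancl:
  assumes T: "inc_tree V E" and "a \<in> chain_to E v" "b \<in> chain_to E v" "a < b"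
  shows "(a, b) \<in> E\<^sup>+"
proof -
  have "(a, b) \<in> E\<^sup>* \<or> (b, a) \<in> E\<^sup>*"
    using inc_tree_ancestors_comparable[OF T] assms(2,3) by (simp add: chain_to_iff)
  moreover have "(b, a) \<notin> E\<^sup>*" using inc_tree_rtrancl_le[OF T] \<open>a < b\<close> by fastforce
  ultimately show ?thesis using \<open>a < b\<close> by (auto simp: rtrancl_eq_or_trancl)
qed

lemma trancl_chain_edges:
  assumes D: "finite D" and c: "c \<in> D"
  shows "d \<in> D \<Longrightarrow> c < d \<Longrightarrow> (c, d) \<in> (chain_edges D)\<^sup>+"
proof (induction d rule: less_induct)
  case (less d)
  let ?S = "{e \<in> D. c \<le> e \<and> e < d}"
  define e where "e = Max ?S"
  have S: "finite ?S" "c \<in> ?S" using D c less.prems by auto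
  have "e \<in> ?S" unfolding e_def using S by (intro Max_in) auto
  then have e: "e \<in> D" "c \<le> e" "e < d" by auto
  have "e' \<le> e" if "e' \<in> D" "e < e'" "e' < d" for e'
    unfolding e_def using S(1) Max_ge that e(2) by simp
  then have "(e, d) \<in> chain_edges D"
    using e less.prems unfolding chain_edges_def by (auto simp: not_le[symmetric])
  moreover have "e = c \<or> (c, e) \<in> (chain_edges D)\<^sup>+" using less.IH e by fastforce
  ultimately show ?case by (metis r_into_trancl' trancl_into_trancl)
qed

lemma card_chain_edges_Image:
  assumes D: "finite D"
  shows "card (chain_edges D `` {i}) = (if i \<in> D \<and> (\<exists>d \<in> D. i < d) then 1 else 0)"
proof (cases "i \<in> D \<and> (\<exists>d \<in> D. i < d)")
  case True
  let ?S = "{d \<in> D. i < d}"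
  have S: "finite ?S" "?S \<noteq> {}" using D True by auto
  have "(i, j) \<in> chain_edges D \<longleftrightarrow> j = Min ?S" for j
  proof
    assume "(i, j) \<in> chain_edges D"
    then have "j \<in> ?S" "\<forall>e \<in> ?S. \<not> e < j" by (auto simp: chain_edges_def)
    then show "j = Min ?S" using Min_in[OF S] Min_le[OF S(1)] by (meson antisym not_le)
  next
    assume "j = Min ?S"
    then show "(i, j) \<in> chain_edges D"
      using True Min_in[OF S] Min_le[OF S(1)] by (auto simp: chain_edges_def leD)
  qed
  then have "chain_edges D `` {i} = {Min ?S}" by auto
  then show ?thesis using True by simp
next
  case False
  then have "chain_edges D `` {i} = {}" by (auto simp: chain_edges_def)
  then show ?thesis using False by simp
qed

lemma inc_tree_Int_chain_to:
  assumes T: "inc_tree V E"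
  shows "E \<inter> (chain_to E v \<times> chain_to E v) = chain_edges (chain_to E v)"
proof (intro set_eqI iffI)
  fix p assume p: "p \<in> E \<inter> (chain_to E v \<times> chain_to E v)"
  obtain a b where [simp]: "p = (a, b)" by (cases p)
  have ab: "(a, b) \<in> E" "a \<in> chain_to E v" "b \<in> chain_to E v" using p by auto
  have "\<not> (\<exists>e \<in> chain_to E v. a < e \<and> e < b)"
    using chain_to_trancl[OF T] inc_tree_edge_not_between[OF T ab(1)] ab(2,3) by blast
  then show "p \<in> chain_edges (chain_to E v)"
    using ab inc_tree_edge_less[OF T ab(1)] by (simp add: chain_edges_def)
next
  fix p assume p: "p \<in> chain_edges (chain_to E v)"
  obtain a b where [simp]: "p = (a, b)" by (cases p)
  have ab: "a \<in> chain_to E v" "b \<in> chain_to E v" "a < b"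
    and no_between: "\<not> (\<exists>e \<in> chain_to E v. a < e \<and> e < b)"
    using p by (auto simp: chain_edges_def)
  obtain w where aw: "(a, w) \<in> E\<^sup>*" and wb: "(w, b) \<in> E"
    using chain_to_trancl[OF T ab] by (meson tranclD2)
  have "w \<in> chain_to E v" using wb ab(2) by (meson chain_to_closed r_into_rtrancl)
  then have "w = a"
    using no_between inc_tree_rtrancl_le[OF T aw] inc_tree_edge_less[OF T wb]
    by (metis le_neq_implies_less)
  then show "p \<in> E \<inter> (chain_to E v \<times> chain_to E v)" using wb ab by simp
qed

lemma rest_edges_subset: "rest_edges E v \<subseteq> E"
  by (auto simp: rest_edges_def)

lemma rest_edges_reach_from_chain:
  assumes T: "inc_tree V E" and v: "v \<in> V" and x: "x \<in> V"
  shows "\<exists>a \<in> chain_to E v. (a, x) \<in> (rest_edges E v)\<^sup>*"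
  using x
proof (induction x rule: less_induct)
  case (less x)
  obtain r where r: "\<forall>b \<in> V. (r, b) \<in> E\<^sup>*" "\<forall>b \<in> V. b \<noteq> r \<longrightarrow> (\<exists>a. (a, b) \<in> E)"
    using inc_tree_root[OF T] by blast
  show ?case
  proof (cases "x \<in> chain_to E v")
    case False
    then have "x \<noteq> r" using r(1) v by (auto simp: chain_to_iff)
    then obtain p where p: "(p, x) \<in> E" using r(2) less.prems by blast
    then have "(p, x) \<in> rest_edges E v" using False by (simp add: rest_edges_def)
    moreover have "\<exists>a \<in> chain_to E v. (a, p) \<in> (rest_edges E v)\<^sup>*"
      using less.IH inc_tree_edge_less[OF T p] inc_tree_edges_subset[OF T] p by blast
    ultimately show ?thesis by (meson rtrancl_into_rtrancl)
  qed blast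
qed

lemma UN_comp_edges:
  assumes T: "inc_tree V E" and v: "v \<in> V"
  shows "(\<Union>a \<in> chain_to E v. comp_edges E v a) = rest_edges E v"
proof
  show "rest_edges E v \<subseteq> (\<Union>a \<in> chain_to E v. comp_edges E v a)"
  proof
    fix p assume p: "p \<in> rest_edges E v"
    obtain x y where [simp]: "p = (x, y)" by (cases p)
    have "x \<in> V" using p rest_edges_subset inc_tree_edges_subset[OF T] by fastforce
    then obtain a where "a \<in> chain_to E v" "(a, x) \<in> (rest_edges E v)\<^sup>*"
      using rest_edges_reach_from_chain[OF T v] by blast
    then show "p \<in> (\<Union>a \<in> chain_to E v. comp_edges E v a)"
      using p by (auto simp: comp_edges_def comp_verts_def)
  qed
qed (auto simp: comp_edges_def)

lemma spl_edges_eq: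
  assumes "inc_tree V1 E1" "inc_tree V2 E2" "v1 \<in> V1" "v2 \<in> V2"
  shows "spl_edges E1 v1 E2 v2
    = chain_edges (chain_to E1 v1 \<union> chain_to E2 v2) \<union> rest_edges E1 v1 \<union> rest_edges E2 v2"
  using assms by (simp add: spl_edges_def UN_comp_edges)

lemma spl_edges_commute: "spl_edges E1 v1 E2 v2 = spl_edges E2 v2 E1 v1"
  unfolding spl_edges_def by (simp add: Un_ac)

lemma spl_edges_less:
  assumes "inc_tree V1 E1" "inc_tree V2 E2" "v1 \<in> V1" "v2 \<in> V2"
    and "(a, b) \<in> spl_edges E1 v1 E2 v2"
  shows "a < b"
  using assms inc_tree_edge_less rest_edges_subset
  by (fastforce simp: spl_edges_eq chain_edges_def)

lemma edges_subset_trancl_spl_edges: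
  assumes T1: "inc_tree V1 E1" and T2: "inc_tree V2 E2" and v1: "v1 \<in> V1" and v2: "v2 \<in> V2"
  shows "E1 \<subseteq> (spl_edges E1 v1 E2 v2)\<^sup>+"
proof
  fix p assume p: "p \<in> E1"
  obtain a b where [simp]: "p = (a, b)" by (cases p)
  let ?D = "chain_to E1 v1 \<union> chain_to E2 v2"
  have "p \<in> rest_edges E1 v1 \<or> (a, b) \<in> (chain_edges ?D)\<^sup>+"
  proof (cases "a \<in> chain_to E1 v1 \<and> b \<in> chain_to E1 v1")
    case True
    have "finite ?D" using finite_chain_to T1 T2 v1 v2 by blast
    then show ?thesis
      using True trancl_chain_edges inc_tree_edge_less[OF T1] p by (metis UnI1 \<open>p = (a, b)\<close>)
  qed (use p in \<open>simp add: rest_edges_def\<close>)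
  then show "p \<in> (spl_edges E1 v1 E2 v2)\<^sup>+"
    unfolding spl_edges_eq[OF T1 T2 v1 v2] by (auto intro: trancl_mono)
qed

lemma rtrancl_spl_edges_from_left:
  assumes T1: "inc_tree V1 E1" and T2: "inc_tree V2 E2" and disj: "V1 \<inter> V2 = {}"
    and v1: "v1 \<in> V1" and v2: "v2 \<in> V2" and i: "i \<in> V1"
    and "(i, y) \<in> (spl_edges E1 v1 E2 v2)\<^sup>*"
  defines "C1 \<equiv> chain_to E1 v1" and "C2 \<equiv> chain_to E2 v2"
  shows "y \<in> V1 \<and> (i, y) \<in> E1\<^sup>* \<or> y \<in> C2 \<and> i \<in> C1 \<and> i < y \<or> y \<in> V2 - C2"
  using assms(7)
proof (induction rule: rtrancl_induct)
  case base
  show ?case using i by simp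
next
  case (step y z)
  have C1: "C1 \<subseteq> V1" and C2: "C2 \<subseteq> V2"
    unfolding C1_def C2_def using chain_to_subset T1 T2 v1 v2 by blast+
  consider (chain) "(y, z) \<in> chain_edges (C1 \<union> C2)" | (left) "(y, z) \<in> rest_edges E1 v1"
    | (right) "(y, z) \<in> rest_edges E2 v2"
    using step.hyps(2) unfolding spl_edges_eq[OF T1 T2 v1 v2] C1_def C2_def by blast
  then show ?case
  proof cases
    case chain
    then have yz: "y \<in> C1 \<union> C2" "z \<in> C1 \<union> C2" "y < z" by (auto simp: chain_edges_def)
    have "i \<in> C1 \<and> i < z"
    proof (cases "y \<in> V1")
      case True
      then have "(i, y) \<in> E1\<^sup>*" "y \<in> C1" using step.IH yz(1) C2 disj by blast+
      then show ?thesis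
        using chain_to_closed inc_tree_rtrancl_le[OF T1] yz(3) unfolding C1_def by fastforce
    next
      case False
      then show ?thesis using step.IH yz C1 by auto
    qed
    moreover have "(i, z) \<in> E1\<^sup>*" if "z \<in> C1"
      using chain_to_trancl[OF T1, where a = i and b = z and v = v1] that calculation unfolding C1_def
      by (auto intro: trancl_into_rtrancl)
    ultimately show ?thesis using yz(2) C1 by blast
  next
    case left
    then have yz: "(y, z) \<in> E1" using rest_edges_subset by blast
    then have "y \<in> V1" "z \<in> V1" using inc_tree_edges_subset[OF T1] by auto
    then have "(i, y) \<in> E1\<^sup>*" using step.IH C2 disj by blast
    then show ?thesis using yz \<open>z \<in> V1\<close> by (blast intro: rtrancl_into_rtrancl)
  next
    case right
    then have e: "(y, z) \<in> E2" and off_chain: "\<not> (y \<in> C2 \<and> z \<in> C2)"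
      by (auto simp: rest_edges_def C2_def)
    have "z \<notin> C2" using off_chain chain_to_closed[of y z E2] e unfolding C2_def by blast
    then show ?thesis using e inc_tree_edges_subset[OF T2] by blast
  qed
qed

lemma trancl_spl_edges_iff:
  assumes T1: "inc_tree V1 E1" and T2: "inc_tree V2 E2" and disj: "V1 \<inter> V2 = {}"
    and v1: "v1 \<in> V1" and v2: "v2 \<in> V2" and i: "i \<in> V1" and j: "j \<in> V1"
  shows "(i, j) \<in> (spl_edges E1 v1 E2 v2)\<^sup>+ \<longleftrightarrow> (i, j) \<in> E1\<^sup>+"
proof
  assume ij: "(i, j) \<in> (spl_edges E1 v1 E2 v2)\<^sup>+"
  then have "(i, j) \<in> (spl_edges E1 v1 E2 v2)\<^sup>*" by (rule trancl_into_rtrancl)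
  then have "(i, j) \<in> E1\<^sup>*"
    using rtrancl_spl_edges_from_left[OF T1 T2 disj v1 v2 i] j disj chain_to_subset[OF T2 v2]
    by blast
  moreover have "i < j"
    using ij by induct (auto dest: spl_edges_less[OF T1 T2 v1 v2])
  ultimately show "(i, j) \<in> E1\<^sup>+" by (auto simp: rtrancl_eq_or_trancl)
next
  assume "(i, j) \<in> E1\<^sup>+"
  then show "(i, j) \<in> (spl_edges E1 v1 E2 v2)\<^sup>+"
    using trancl_mono_subset[OF edges_subset_trancl_spl_edges[OF T1 T2 v1 v2]] by auto
qed

lemma spl_edges_injective:
  assumes T1: "inc_tree V1 E1" and T2: "inc_tree V2 E2"
    and T1': "inc_tree V1 E1'" and T2': "inc_tree V2 E2'" and disj: "V1 \<inter> V2 = {}"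
    and v1: "v1 \<in> V1" "v1' \<in> V1" and v2: "v2 \<in> V2" "v2' \<in> V2"
    and eq: "spl_edges E1' v1' E2' v2' = spl_edges E1 v1 E2 v2"
  shows "E1' = E1 \<and> E2' = E2"
proof
  show "E1' = E1"
    using trancl_spl_edges_iff[OF T1 T2 disj v1(1) v2(1)]
      trancl_spl_edges_iff[OF T1' T2' disj v1(2) v2(2)]
    by (intro inc_tree_eqI_trancl[OF T1' T1]) (simp add: eq)
  have disj': "V2 \<inter> V1 = {}" using disj by blast
  show "E2' = E2"
    using trancl_spl_edges_iff[OF T2 T1 disj' v2(1) v1(1)]
      trancl_spl_edges_iff[OF T2' T1' disj' v2(2) v1(2)]
    by (intro inc_tree_eqI_trancl[OF T2' T2]) (simp add: eq spl_edges_commute)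
qed

lemma sons_eq_card_Image: "sons E i = card (E `` {i})"
  by (simp add: sons_def Image_singleton)

lemma chain_edges_subset: "chain_edges C \<subseteq> C \<times> C"
  by (auto simp: chain_edges_def)

lemma finite_Image_inc_tree: "inc_tree V E \<Longrightarrow> finite (E `` {i})"
  using inc_tree_edges_subset[of V E] finite_subset[of "E `` {i}" V] by (auto simp: inc_tree_def)

lemma sons_split_chain:
  assumes T: "inc_tree V E"
  shows "sons E i
    = card (rest_edges E v `` {i}) + card (chain_edges (chain_to E v) `` {i})"
proof -
  let ?C = "chain_to E v"
  have "E = rest_edges E v \<union> chain_edges ?C"
    using inc_tree_Int_chain_to[OF T, of v] by (auto simp: rest_edges_def)
  then have "E `` {i} = (rest_edges E v \<union> chain_edges ?C) `` {i}"
    by (rule arg_cong[where f = "\<lambda>R. R `` {i}"])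
  also have "\<dots> = rest_edges E v `` {i} \<union> chain_edges ?C `` {i}"
    by (rule Un_Image)
  finally have split: "E `` {i} = rest_edges E v `` {i} \<union> chain_edges ?C `` {i}" .
  have "rest_edges E v `` {i} \<inter> chain_edges ?C `` {i} = {}"
    using chain_edges_subset[of ?C] by (auto simp: rest_edges_def)
  moreover have "finite (rest_edges E v `` {i})" "finite (chain_edges ?C `` {i})"
    using finite_Image_inc_tree[OF T, of i] split by auto
  ultimately show ?thesis
    unfolding sons_eq_card_Image split by (rule card_Un_disjoint[rotated 2])
qed

lemma sons_spl_edges_exchange:
  assumes T1: "inc_tree V1 E1" and T2: "inc_tree V2 E2" and disj: "V1 \<inter> V2 = {}"
    and v1: "v1 \<in> V1" and v2: "v2 \<in> V2" and i: "i \<in> V1"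
  defines "D \<equiv> chain_to E1 v1 \<union> chain_to E2 v2"
  shows "sons (spl_edges E1 v1 E2 v2) i + card (chain_edges (chain_to E1 v1) `` {i})
    = sons E1 i + card (chain_edges D `` {i})"
proof -
  let ?R1 = "rest_edges E1 v1"
  have "rest_edges E2 v2 `` {i} = {}"
    using i disj rest_edges_subset inc_tree_edges_subset[OF T2] by blast
  then have split: "spl_edges E1 v1 E2 v2 `` {i} = ?R1 `` {i} \<union> chain_edges D `` {i}"
    unfolding spl_edges_eq[OF T1 T2 v1 v2] D_def Un_Image by (simp add: Un_commute)
  have D: "finite D" "D \<inter> V1 \<subseteq> chain_to E1 v1"
    using finite_chain_to[OF T1 v1] finite_chain_to[OF T2 v2] chain_to_subset[OF T2 v2] disj
    unfolding D_def by auto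
  have "j \<notin> chain_edges D `` {i}" if "j \<in> ?R1 `` {i}" for j
  proof -
    from that have "(i, j) \<in> E1" "\<not> (i \<in> chain_to E1 v1 \<and> j \<in> chain_to E1 v1)"
      by (auto simp: rest_edges_def)
    then show ?thesis using inc_tree_edges_subset[OF T1] D(2) chain_edges_subset[of D] by blast
  qed
  then have "?R1 `` {i} \<inter> chain_edges D `` {i} = {}" by blast
  moreover have "finite (?R1 `` {i})"
    using finite_Image_inc_tree[OF T1] Image_mono[OF rest_edges_subset subset_refl]
    by (rule finite_subset[rotated])
  moreover have "finite (chain_edges D `` {i})"
    by (rule finite_subset[OF _ D(1)]) (auto simp: chain_edges_def)
  ultimately have "sons (spl_edges E1 v1 E2 v2) i = card (?R1 `` {i}) + card (chain_edges D `` {i})"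
    unfolding sons_eq_card_Image split by (rule card_Un_disjoint[rotated 2])
  then show ?thesis using sons_split_chain[OF T1, of i v1] by simp
qed

lemma sons_spl_edges_left:
  assumes T1: "inc_tree V1 E1" and T2: "inc_tree V2 E2" and disj: "V1 \<inter> V2 = {}"
    and v1: "v1 \<in> V1" and v2: "v2 \<in> V2" and gt: "v2 < v1" and i: "i \<in> V1"
  shows "sons (spl_edges E1 v1 E2 v2) i = sons E1 i"
proof -
  let ?C1 = "chain_to E1 v1" and ?C2 = "chain_to E2 v2"
  have "finite ?C1" "finite ?C2" using finite_chain_to T1 T2 v1 v2 by blast+
  moreover have "i \<notin> ?C2" using chain_to_subset[OF T2 v2] disj i by blast
  ultimately have "card (chain_edges ?C1 `` {i}) = card (chain_edges (?C1 \<union> ?C2) `` {i})"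
    using gt by (auto simp: card_chain_edges_Image bex_Un
        chain_to_has_greater_iff[OF T1] chain_to_has_greater_iff[OF T2])
  then show ?thesis using sons_spl_edges_exchange[OF T1 T2 disj v1 v2 i] by simp
qed

lemma sons_spl_edges_right:
  assumes T1: "inc_tree V1 E1" and T2: "inc_tree V2 E2" and disj: "V1 \<inter> V2 = {}"
    and v1: "v1 \<in> V1" and v2: "v2 \<in> V2" and gt: "v2 < v1" and i: "i \<in> V2"
  shows "sons (spl_edges E1 v1 E2 v2) i = sons E2 i + (if i = v2 then 1 else 0)"
proof -
  let ?C1 = "chain_to E1 v1" and ?C2 = "chain_to E2 v2"
  have "V2 \<inter> V1 = {}" using disj by blast
  note exchange = sons_spl_edges_exchange[OF T2 T1 this v2 v1 i]
  have fin: "finite ?C1" "finite ?C2" using finite_chain_to T1 T2 v1 v2 by blast+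
  have "card (chain_edges ?C2 `` {i}) = (if i \<in> ?C2 \<and> i \<noteq> v2 then 1 else 0)"
    using chain_to_le[OF T2, of i v2]
    by (auto simp: card_chain_edges_Image[OF fin(2)] chain_to_has_greater_iff[OF T2])
  moreover have "i \<notin> ?C1" using chain_to_subset[OF T1 v1] disj i by blast
  then have "card (chain_edges (?C2 \<union> ?C1) `` {i}) = (if i \<in> ?C2 then 1 else 0)"
    using chain_to_le[OF T2, of i v2] gt fin
    by (auto simp: card_chain_edges_Image bex_Un
        chain_to_has_greater_iff[OF T1] chain_to_has_greater_iff[OF T2])
  ultimately show ?thesis
    using exchange by (auto simp: spl_edges_commute split: if_splits)
qed

theorem lemma2p4:
  fixes V1 V2 :: "nat set" and E1 E2 :: "(nat \<times> nat) set" and v1 v2 :: nat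
  assumes T1: "inc_tree V1 E1" and T2: "inc_tree V2 E2"
    and disj: "V1 \<inter> V2 = {}"
    and v1: "v1 \<in> V1" and v2: "v2 \<in> V2" and gt: "v1 > v2"
  defines "R \<equiv> spl_edges E1 v1 E2 v2"
  shows
    "(\<forall>i \<in> V1. \<forall>j \<in> V1. ancestor E1 i j \<longleftrightarrow> ancestor R i j) \<and>
     (\<forall>i \<in> V2. \<forall>j \<in> V2. ancestor E2 i j \<longleftrightarrow> ancestor R i j) \<and>
     (\<forall>E1' E2' v1' v2'. inc_tree V1 E1' \<longrightarrow> inc_tree V2 E2' \<longrightarrow>
        v1' \<in> V1 \<longrightarrow> v2' \<in> V2 \<longrightarrow> v1' > v2' \<longrightarrow>
        spl_edges E1' v1' E2' v2' = R \<longrightarrow> E1' = E1 \<and> E2' = E2) \<and>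
     (\<forall>i \<in> V1. sons R i = sons E1 i) \<and>
     sons R v2 = sons E2 v2 + 1 \<and>
     (\<forall>i \<in> V2. i \<noteq> v2 \<longrightarrow> sons R i = sons E2 i)"
proof -
  have disj': "V2 \<inter> V1 = {}" using disj by blast
  have "\<forall>i \<in> V1. \<forall>j \<in> V1. ancestor E1 i j \<longleftrightarrow> ancestor R i j"
    using trancl_spl_edges_iff[OF T1 T2 disj v1 v2] by (simp add: ancestor_def R_def)
  moreover have "\<forall>i \<in> V2. \<forall>j \<in> V2. ancestor E2 i j \<longleftrightarrow> ancestor R i j"
    using trancl_spl_edges_iff[OF T2 T1 disj' v2 v1]
    by (simp add: ancestor_def R_def spl_edges_commute)
  moreover have "\<forall>E1' E2' v1' v2'. inc_tree V1 E1' \<longrightarrow> inc_tree V2 E2' \<longrightarrow>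
      v1' \<in> V1 \<longrightarrow> v2' \<in> V2 \<longrightarrow> v1' > v2' \<longrightarrow>
      spl_edges E1' v1' E2' v2' = R \<longrightarrow> E1' = E1 \<and> E2' = E2"
    using spl_edges_injective[OF T1 T2 _ _ disj v1 _ v2] unfolding R_def by blast
  ultimately show ?thesis
    using sons_spl_edges_left[OF T1 T2 disj v1 v2 gt] sons_spl_edges_right[OF T1 T2 disj v1 v2 gt]
      v2 unfolding R_def by simp
qed

end
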